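(* Let $\sigma=(1\,2\,\cdots\,n)\in\mathrm{Sym}(n)$. For every $\epsilon>0$, for all sufficiently large $n$ there exist two finite generating sets $S_{\rm pos}$ and $S_{\rm neg}$ of $\mathrm{Sym}(n)$ (each symmetric, not containing $e$) such that: with respect to $S_{\rm pos}$, $|\sigma|=2$, $\mathrm{Av}(\sigma)<1+\epsilon$ and $\kappa(\sigma)>\frac{1-\epsilon}{2}$; and with respect to $S_{\rm neg}$, $|\sigma|=1$, $\mathrm{Av}(\sigma)>3-\epsilon$ and $\kappa(\sigma)<-2+\epsilon$.
   Context: For a group with finite generating set $S$ ($S=S^{-1}$, $e\notin S$), $|x|$ is word length, $\mathrm{Av}(g)=\frac{1}{|S|}\sum_{a\in S}|a^{-1}ga|$, and for $g\neq e$ the curvature is $\kappa(g)=\frac{|g|-\mathrm{Av}(g)}{|g|}$. *)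

theory Defs
  imports "HOL-Combinatorics.Permutations" Complex_Main
begin

definition sym :: "nat \<Rightarrow> (nat \<Rightarrow> nat) set" where
  "sym n = {p. p permutes {1..n}}"

definition ncycle :: "nat \<Rightarrow> nat \<Rightarrow> nat" where
  "ncycle n i = (if 1 \<le> i \<and> i < n then i + 1 else if i = n \<and> 1 \<le> n then 1 else i)"

definition word_prod :: "(nat \<Rightarrow> nat) list \<Rightarrow> nat \<Rightarrow> nat" where
  "word_prod ws = foldr (\<circ>) ws id"

definition sym_gen_set :: "nat \<Rightarrow> (nat \<Rightarrow> nat) set \<Rightarrow> bool" where
  "sym_gen_set n S \<longleftrightarrow> finite S \<and> S \<subseteq> sym n \<and> id \<notin> S \<and> (\<forall>a\<in>S. inv a \<in> S)
     \<and> (\<forall>g\<in>sym n. \<exists>ws. set ws \<subseteq> S \<and> word_prod ws = g)"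

definition word_len :: "(nat \<Rightarrow> nat) set \<Rightarrow> (nat \<Rightarrow> nat) \<Rightarrow> nat" where
  "word_len S g = (LEAST k. \<exists>ws. length ws = k \<and> set ws \<subseteq> S \<and> word_prod ws = g)"

definition Av :: "(nat \<Rightarrow> nat) set \<Rightarrow> (nat \<Rightarrow> nat) \<Rightarrow> real" where
  "Av S g = (\<Sum>a\<in>S. real (word_len S (inv a \<circ> g \<circ> a))) / real (card S)"

definition curv :: "(nat \<Rightarrow> nat) set \<Rightarrow> (nat \<Rightarrow> nat) \<Rightarrow> real" where
  "curv S g = (real (word_len S g) - Av S g) / real (word_len S g)"

end

theory Submission
  imports Defs
begin

(* Every conjugate a^-1 sigma a of the n-cycle sigma equals a prescribed permutation h for at most
   n permutations a: the inverse of a intertwines sigma with h, so it is determined by its value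
   at 1. Hence only O(n) generators conjugate sigma onto any fixed finite list of permutations,
   whereas both generating sets have quadratically many elements.

   For S_pos = Sym(n) - {e, sigma, sigma^-1} every permutation has length at most 2 (sigma and its
   inverse factor through the transposition (1 2)), and every conjugate of sigma other than
   sigma^(+-1) is a generator, so Av(sigma) <= 1 + 2/n.

   For S_neg = {sigma, sigma^-1} together with all transpositions, every conjugate of sigma other than
   sigma^(+-1) and sigma^(+-2) has length at least 3: it moves all n points, while a product of
   two transpositions moves at most 4, and a product of sigma^(+-1) with a transposition has the
   wrong parity. *)

lemma word_len_le: "set ws \<subseteq> S \<Longrightarrow> word_prod ws = g \<Longrightarrow> word_len S g \<le> length ws"
  unfolding word_len_def by (rule Least_le) blast

lemma word_len_generator_le: "s \<in> S \<Longrightarrow> word_len S s \<le> 1"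
  using word_len_le[of "[s]" S s] by (simp add: word_prod_def)

lemma word_len_witness:
  assumes "\<exists>ws. set ws \<subseteq> S \<and> word_prod ws = g"
  obtains ws where "set ws \<subseteq> S" "word_prod ws = g" "length ws = word_len S g"
proof -
  have "\<exists>k ws. length ws = k \<and> set ws \<subseteq> S \<and> word_prod ws = g"
    using assms by blast
  from LeastI_ex[OF this] obtain ws
    where "length ws = word_len S g" "set ws \<subseteq> S" "word_prod ws = g"
    unfolding word_len_def by blast
  then show ?thesis
    by (intro that)
qed

lemma word_len_short:
  assumes "\<exists>ws. set ws \<subseteq> S \<and> word_prod ws = g"
  shows "word_len S g = 0 \<Longrightarrow> g = id"
    and "word_len S g = 1 \<Longrightarrow> g \<in> S"
    and "word_len S g = 2 \<Longrightarrow> \<exists>s\<in>S. \<exists>t\<in>S. g = s \<circ> t"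
proof -
  obtain ws where ws: "set ws \<subseteq> S" "word_prod ws = g" "length ws = word_len S g"
    using word_len_witness[OF assms] .
  show "word_len S g = 0 \<Longrightarrow> g = id"
    using ws by (simp add: word_prod_def)
  show "g \<in> S" if len: "word_len S g = 1"
  proof -
    have "length ws = 1"
      using ws(3) len by simp
    then obtain s where "ws = [s]"
      by (cases ws) auto
    then show ?thesis
      using ws by (simp add: word_prod_def)
  qed
  show "\<exists>s\<in>S. \<exists>t\<in>S. g = s \<circ> t" if len: "word_len S g = 2"
  proof -
    have "length ws = 2"
      using ws(3) len by simp
    then obtain s t where "ws = [s, t]"
      by (cases ws; cases "tl ws") auto
    then show ?thesis
      using ws by (auto simp: word_prod_def)
  qed
qed

lemma Av_le_of_conjugate_bound:
  fixes k :: nat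
  assumes "finite S"
    and "\<And>a. a \<in> S \<Longrightarrow> word_len S (inv a \<circ> g \<circ> a) \<le> k + (if a \<in> B then 1 else 0)"
  shows "Av S g \<le> k + card (S \<inter> B) / card S"
proof (cases "S = {}")
  case False
  have "(\<Sum>a\<in>S. real (word_len S (inv a \<circ> g \<circ> a)))
      \<le> (\<Sum>a\<in>S. real k + (if a \<in> B then 1 else 0))"
  proof (rule sum_mono)
    fix a assume "a \<in> S"
    from of_nat_mono[OF assms(2)[OF this]]
    show "real (word_len S (inv a \<circ> g \<circ> a)) \<le> real k + (if a \<in> B then 1 else 0)"
      by (simp split: if_splits)
  qed
  also have "\<dots> = k * card S + card (S \<inter> B)"
    using assms(1) by (simp add: sum.distrib sum.If_cases Int_def)
  finally have sum_le:
    "(\<Sum>a\<in>S. real (word_len S (inv a \<circ> g \<circ> a))) \<le> k * card S + card (S \<inter> B)" .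
  have "Av S g \<le> (k * card S + card (S \<inter> B)) / card S"
    unfolding Av_def using sum_le by (rule divide_right_mono) simp
  also have "\<dots> = k + card (S \<inter> B) / card S"
    using False assms(1) by (simp add: field_simps)
  finally show ?thesis .
qed (simp add: Av_def)

lemma Av_ge_of_conjugate_bound:
  fixes k :: nat
  assumes "finite S" and "\<And>a. a \<in> S - B \<Longrightarrow> k \<le> word_len S (inv a \<circ> g \<circ> a)"
  shows "k * (card S - real (card (S \<inter> B))) / card S \<le> Av S g"
proof -
  have "k * (card S - real (card (S \<inter> B))) = (\<Sum>a\<in>S - B. real k)"
    using assms(1) card_mono[of S "S \<inter> B"] by (simp add: card_Diff_subset_Int of_nat_diff)
  also have "\<dots> \<le> (\<Sum>a\<in>S - B. real (word_len S (inv a \<circ> g \<circ> a)))"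
    using assms(2) by (intro sum_mono) simp
  also have "\<dots> \<le> (\<Sum>a\<in>S. real (word_len S (inv a \<circ> g \<circ> a)))"
    using assms(1) by (intro sum_mono2) auto
  finally show ?thesis
    unfolding Av_def by (simp add: divide_right_mono)
qed

lemma evenperm_conjugate:
  assumes "permutation a" "permutation p"
  shows "evenperm (inv a \<circ> p \<circ> a) = evenperm p"
  using assms by (auto simp: evenperm_comp evenperm_inv permutation_compose permutation_inverse)

lemma sym_finite: "finite (sym n)"
  unfolding sym_def by (rule finite_permutations) simp

lemma card_sym: "card (sym n) = fact n"
  unfolding sym_def by (rule card_permutations) auto

definition ncycle_inv :: "nat \<Rightarrow> nat \<Rightarrow> nat" where
  "ncycle_inv n i = (if 1 < i \<and> i \<le> n then i - 1 else if i = 1 \<and> 1 \<le> n then n else i)"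

lemma ncycle_comp_ncycle_inv: "ncycle n \<circ> ncycle_inv n = id"
  by (auto simp: fun_eq_iff ncycle_def ncycle_inv_def)

lemma ncycle_inv_comp_ncycle: "ncycle_inv n \<circ> ncycle n = id"
  by (auto simp: fun_eq_iff ncycle_def ncycle_inv_def)

lemma ncycle_permutes: "ncycle n permutes {1..n}"
proof -
  have "bij (ncycle n)"
    using ncycle_comp_ncycle_inv ncycle_inv_comp_ncycle by (metis o_bij)
  then show ?thesis
    unfolding permutes_def by (auto simp: ncycle_def bij_iff)
qed

lemma inv_ncycle: "inv (ncycle n) = ncycle_inv n"
  using inv_unique_comp[OF ncycle_comp_ncycle_inv ncycle_inv_comp_ncycle] by simp

lemma inv_ncycle_inv: "inv (ncycle_inv n) = ncycle n"
  using inv_unique_comp[OF ncycle_inv_comp_ncycle ncycle_comp_ncycle_inv] by simp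

lemma ncycle_inv_permutes: "ncycle_inv n permutes {1..n}"
  using permutes_inv[OF ncycle_permutes] by (simp add: inv_ncycle)

lemma ncycle_in_sym: "ncycle n \<in> sym n" "ncycle_inv n \<in> sym n"
  using ncycle_permutes ncycle_inv_permutes by (auto simp: sym_def)

lemma ncycle_neq_id: "2 \<le> n \<Longrightarrow> ncycle n \<noteq> id"
  by (auto simp: fun_eq_iff ncycle_def intro!: exI[of _ 1])

lemma ncycle_inv_neq_id: "2 \<le> n \<Longrightarrow> ncycle_inv n \<noteq> id"
  by (auto simp: fun_eq_iff ncycle_inv_def intro!: exI[of _ 1])

lemma ncycle_funpow_1: "k < n \<Longrightarrow> (ncycle n ^^ k) 1 = k + 1"
  by (induction k) (auto simp: ncycle_def)

lemma ncycle_conjugate_no_fixpoint: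
  assumes "a permutes {1..n}" "2 \<le> n" "x \<in> {1..n}"
  shows "(inv a \<circ> ncycle n \<circ> a) x \<noteq> x"
proof
  assume "(inv a \<circ> ncycle n \<circ> a) x = x"
  then have "ncycle n (a x) = a x"
    using assms(1) by (metis comp_apply permutes_inv_eq)
  moreover have "a x \<in> {1..n}"
    using permutes_in_image[OF assms(1)] assms(3) by blast
  ultimately show False
    using assms(2) by (auto simp: ncycle_def split: if_splits)
qed

lemma ncycle_conjugate_in_sym: "a \<in> sym n \<Longrightarrow> inv a \<circ> ncycle n \<circ> a \<in> sym n"
  using ncycle_permutes unfolding sym_def by (blast intro: permutes_compose permutes_inv)

lemma ncycle_conjugate_neq_id:
  assumes "a \<in> sym n" "2 \<le> n"
  shows "inv a \<circ> ncycle n \<circ> a \<noteq> id"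
proof -
  have "(inv a \<circ> ncycle n \<circ> a) 1 \<noteq> 1"
    using assms by (intro ncycle_conjugate_no_fixpoint) (auto simp: sym_def)
  then show ?thesis
    by (metis id_apply)
qed

lemma ncycle_conjugate_support_card:
  assumes "a \<in> sym n" "2 \<le> n" "finite F" "{x. (inv a \<circ> ncycle n \<circ> a) x \<noteq> x} \<subseteq> F"
  shows "n \<le> card F"
proof -
  have "{1..n} \<subseteq> F"
    using ncycle_conjugate_no_fixpoint[of a n] assms by (auto simp: sym_def)
  then have "card {1..n} \<le> card F"
    by (rule card_mono[OF assms(3)])
  then show ?thesis
    by simp
qed

lemma ncycle_intertwiner_unique:
  assumes "a permutes {1..n}" "b permutes {1..n}"
    and "a \<circ> ncycle n = f \<circ> a" "b \<circ> ncycle n = f \<circ> b" and "a 1 = b 1"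
  shows "a = b"
proof
  fix x
  have a_pow: "a ((ncycle n ^^ k) 1) = (f ^^ k) (a 1)" for k
    using assms(3) by (induction k) (auto simp: fun_eq_iff)
  have b_pow: "b ((ncycle n ^^ k) 1) = (f ^^ k) (b 1)" for k
    using assms(4) by (induction k) (auto simp: fun_eq_iff)
  show "a x = b x"
  proof (cases "x \<in> {1..n}")
    case True
    then have "x = (ncycle n ^^ (x - 1)) 1"
      using ncycle_funpow_1[of "x - 1" n] by auto
    then show ?thesis
      using a_pow b_pow assms(5) by metis
  next
    case False
    then show ?thesis
      using assms(1,2) by (simp add: permutes_not_in)
  qed
qed

lemma card_ncycle_conjugators:
  assumes "1 \<le> n"
  shows "card {a \<in> sym n. inv a \<circ> ncycle n \<circ> a = h} \<le> n"
proof -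
  let ?A = "{a \<in> sym n. inv a \<circ> ncycle n \<circ> a = h}"
  have intertwines: "inv a \<circ> ncycle n = h \<circ> inv a" if "a \<in> ?A" for a
  proof -
    from that have "a permutes {1..n}" "inv a \<circ> ncycle n \<circ> a = h"
      by (auto simp: sym_def)
    then show ?thesis
      by (metis comp_assoc comp_id permutes_inv_o(1))
  qed
  have "inj_on (\<lambda>a. inv a 1) ?A"
  proof (rule inj_onI)
    fix a b assume ab: "a \<in> ?A" "b \<in> ?A" "inv a 1 = inv b 1"
    then have "a permutes {1..n}" "b permutes {1..n}"
      by (auto simp: sym_def)
    moreover have "inv a = inv b"
      using ab calculation
      by (intro ncycle_intertwiner_unique[OF _ _ intertwines intertwines]) (auto intro: permutes_inv)
    ultimately show "a = b"
      by (metis permutes_inv_inv)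
  qed
  moreover have "(\<lambda>a. inv a 1) ` ?A \<subseteq> {1..n}"
    using assms by (auto simp: sym_def intro: permutes_in_image[THEN iffD2, OF permutes_inv])
  ultimately have "card ?A \<le> card {1..n}"
    by (intro card_inj_on_le) auto
  then show ?thesis
    by simp
qed

lemma card_ncycle_conjugators_in:
  assumes "1 \<le> n" "finite H"
  shows "card {a \<in> sym n. inv a \<circ> ncycle n \<circ> a \<in> H} \<le> card H * n"
proof -
  have "{a \<in> sym n. inv a \<circ> ncycle n \<circ> a \<in> H}
      = (\<Union>h\<in>H. {a \<in> sym n. inv a \<circ> ncycle n \<circ> a = h})"
    by blast
  also have "card \<dots> \<le> (\<Sum>h\<in>H. card {a \<in> sym n. inv a \<circ> ncycle n \<circ> a = h})"
    by (rule card_UN_le[OF assms(2)])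
  also have "\<dots> \<le> card H * n"
    using sum_bounded_above[of H _ n] card_ncycle_conjugators[OF assms(1)] by simp
  finally show ?thesis .
qed

lemma square_plus_3_le_fact: "4 \<le> n \<Longrightarrow> n * n + 3 \<le> fact n"
proof (induction n rule: nat_induct_at_least)
  case base
  then show ?case by (simp add: fact_numeral)
next
  case (Suc n)
  have "Suc n * Suc n + 3 \<le> Suc n * (n * n + 3)"
    using Suc by (simp add: algebra_simps)
  also have "\<dots> \<le> Suc n * fact n"
    using Suc.IH by (intro mult_le_mono2)
  finally show ?case
    by simp
qed

definition Spos :: "nat \<Rightarrow> (nat \<Rightarrow> nat) set" where
  "Spos n = sym n - {id, ncycle n, ncycle_inv n}"

lemma transpose_12_in_Spos:
  assumes "4 \<le> n"
  shows "Transposition.transpose 1 2 \<in> Spos n"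
proof -
  have "Transposition.transpose 1 2 \<in> sym n"
    using assms unfolding sym_def by (auto intro: permutes_swap_id)
  moreover have "Transposition.transpose (1::nat) 2 \<notin> {id, ncycle n, ncycle_inv n}"
    using assms by (auto simp: ncycle_def ncycle_inv_def dest: fun_cong[where x = 1] fun_cong[where x = 3])
  ultimately show ?thesis
    by (simp add: Spos_def)
qed

lemma ncycle_times_transpose_in_Spos:
  assumes "4 \<le> n" "g \<in> {ncycle n, ncycle_inv n}"
  shows "g \<circ> Transposition.transpose 1 2 \<in> Spos n"
proof -
  have "g \<circ> Transposition.transpose 1 2 \<in> sym n"
    using assms ncycle_in_sym transpose_12_in_Spos unfolding sym_def Spos_def
    by (auto intro: permutes_compose)
  moreover have "g \<circ> Transposition.transpose 1 2 \<notin> {id, ncycle n, ncycle_inv n}"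
    using assms by (auto simp: ncycle_def ncycle_inv_def dest: fun_cong[where x = 1] fun_cong[where x = 2])
  ultimately show ?thesis
    by (simp add: Spos_def)
qed

lemma Spos_short_word:
  assumes "4 \<le> n" "g \<in> sym n"
  obtains ws where "set ws \<subseteq> Spos n" "word_prod ws = g" "length ws \<le> 2"
proof -
  let ?t = "Transposition.transpose (1::nat) 2"
  consider "g = id" | "g \<in> Spos n" | "g \<in> {ncycle n, ncycle_inv n}"
    using assms(2) by (auto simp: Spos_def)
  then show ?thesis
  proof cases
    case 1
    then show ?thesis
      by (intro that[of "[]"]) (auto simp: word_prod_def)
  next
    case 2
    then show ?thesis
      by (intro that[of "[g]"]) (auto simp: word_prod_def)
  next
    case 3
    then show ?thesis
      using assms(1) transpose_12_in_Spos ncycle_times_transpose_in_Spos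
      by (intro that[of "[g \<circ> ?t, ?t]"]) (auto simp: word_prod_def comp_assoc)
  qed
qed

lemma sym_gen_set_Spos:
  assumes "4 \<le> n"
  shows "sym_gen_set n (Spos n)"
  unfolding sym_gen_set_def
proof (intro conjI ballI)
  show "finite (Spos n)" "Spos n \<subseteq> sym n" "id \<notin> Spos n"
    using sym_finite by (auto simp: Spos_def)
next
  fix a assume a: "a \<in> Spos n"
  then have "a permutes {1..n}"
    by (auto simp: Spos_def sym_def)
  with a show "inv a \<in> Spos n"
    by (auto simp: Spos_def sym_def permutes_inv)
      (metis permutes_inv_inv inv_id inv_ncycle inv_ncycle_inv)+
next
  fix g assume "g \<in> sym n"
  then show "\<exists>ws. set ws \<subseteq> Spos n \<and> word_prod ws = g"
    using Spos_short_word[OF assms] by metis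
qed

lemma word_len_Spos_le_2:
  assumes "4 \<le> n" "g \<in> sym n"
  shows "word_len (Spos n) g \<le> 2"
proof -
  obtain ws where ws: "set ws \<subseteq> Spos n" "word_prod ws = g" "length ws \<le> 2"
    using Spos_short_word[OF assms] .
  then show ?thesis
    using word_len_le[OF ws(1,2)] by linarith
qed

lemma word_len_Spos_ncycle:
  assumes "4 \<le> n"
  shows "word_len (Spos n) (ncycle n) = 2"
proof -
  have gen: "\<exists>ws. set ws \<subseteq> Spos n \<and> word_prod ws = ncycle n"
    using sym_gen_set_Spos[OF assms] ncycle_in_sym by (auto simp: sym_gen_set_def)
  have "ncycle n \<noteq> id" "ncycle n \<notin> Spos n"
    using assms ncycle_neq_id by (auto simp: Spos_def)
  then have "word_len (Spos n) (ncycle n) \<noteq> 0" "word_len (Spos n) (ncycle n) \<noteq> 1"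
    using word_len_short[OF gen] by auto
  then show ?thesis
    using word_len_Spos_le_2[OF assms ncycle_in_sym(1)] by linarith
qed

lemma card_Spos:
  assumes "4 \<le> n"
  shows "n * n \<le> card (Spos n)"
proof -
  have "card (sym n) - card {id, ncycle n, ncycle_inv n} \<le> card (Spos n)"
    unfolding Spos_def by (rule diff_card_le_card_Diff) simp
  moreover have "card {id, ncycle n, ncycle_inv n} \<le> 3"
    using card_length[of "[id, ncycle n, ncycle_inv n]"] by simp
  ultimately show ?thesis
    using square_plus_3_le_fact[OF assms] card_sym[of n] by linarith
qed

lemma Av_Spos_le:
  assumes "4 \<le> n"
  shows "Av (Spos n) (ncycle n) \<le> 1 + 2 / n"
proof -
  let ?S = "Spos n" and ?H = "{ncycle n, ncycle_inv n}"
  let ?B = "{a \<in> sym n. inv a \<circ> ncycle n \<circ> a \<in> ?H}"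
  have "word_len ?S (inv a \<circ> ncycle n \<circ> a) \<le> 1 + (if a \<in> ?B then 1 else 0)" if "a \<in> ?S" for a
  proof -
    have a: "a \<in> sym n"
      using that by (simp add: Spos_def)
    note conj = ncycle_conjugate_in_sym[OF a]
    show ?thesis
    proof (cases "a \<in> ?B")
      case True
      then show ?thesis
        using word_len_Spos_le_2[OF assms conj] by simp
    next
      case False
      have "inv a \<circ> ncycle n \<circ> a \<noteq> id"
        using a assms by (intro ncycle_conjugate_neq_id) auto
      with conj False a have "inv a \<circ> ncycle n \<circ> a \<in> ?S"
        by (auto simp: Spos_def)
      then show ?thesis
        unfolding if_not_P[OF False] using word_len_generator_le by simp
    qed
  qed
  then have "Av ?S (ncycle n) \<le> 1 + card (?S \<inter> ?B) / card ?S"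
    using Av_le_of_conjugate_bound[of ?S "ncycle n" 1 ?B] sym_finite by (simp add: Spos_def)
  also have "\<dots> \<le> 1 + (2 * n) / (n * n)"
  proof -
    have "card (?S \<inter> ?B) \<le> card ?B"
      using sym_finite by (intro card_mono) auto
    also have "\<dots> \<le> card ?H * n"
      using assms by (intro card_ncycle_conjugators_in) auto
    also have "\<dots> \<le> 2 * n"
      using card_length[of "[ncycle n, ncycle_inv n]"] by simp
    finally have "real (card (?S \<inter> ?B)) \<le> 2 * n"
      by simp
    moreover have "real (n * n) \<le> card ?S"
      using card_Spos[OF assms] by (rule of_nat_mono)
    ultimately show ?thesis
      using assms by (intro add_left_mono frac_le) auto
  qed
  also have "\<dots> = 1 + 2 / n"
    by simp
  finally show ?thesis .
qed

definition transpositions :: "nat \<Rightarrow> (nat \<Rightarrow> nat) set" where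
  "transpositions n = {Transposition.transpose x y | x y. x \<in> {1..n} \<and> y \<in> {1..n} \<and> x \<noteq> y}"

definition Sneg :: "nat \<Rightarrow> (nat \<Rightarrow> nat) set" where
  "Sneg n = insert (ncycle n) (insert (ncycle_inv n) (transpositions n))"

lemma transpositions_subset_sym: "transpositions n \<subseteq> sym n"
  by (auto simp: transpositions_def sym_def intro!: permutes_swap_id)

lemma Sneg_subset_sym: "Sneg n \<subseteq> sym n"
  using transpositions_subset_sym ncycle_in_sym by (auto simp: Sneg_def)

lemma transpositions_generate:
  assumes "p permutes {1..n}"
  shows "\<exists>ws. set ws \<subseteq> transpositions n \<and> word_prod ws = p"
  using assms finite_atLeastAtMost[of 1 n]
proof (induction rule: permutes_induct)
  case id
  then show ?case
    by (intro exI[of _ "[]"]) (simp add: word_prod_def)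
next
  case (swap a b p)
  then obtain ws where "set ws \<subseteq> transpositions n" "word_prod ws = p"
    by blast
  moreover have "Transposition.transpose a b \<in> transpositions n"
    using swap by (auto simp: transpositions_def)
  ultimately show ?case
    by (intro exI[of _ "Transposition.transpose a b # ws"]) (simp add: word_prod_def)
qed

lemma sym_gen_set_Sneg:
  assumes "2 \<le> n"
  shows "sym_gen_set n (Sneg n)"
  unfolding sym_gen_set_def
proof (intro conjI ballI)
  show "finite (Sneg n)"
    using Sneg_subset_sym sym_finite by (rule finite_subset)
  show "Sneg n \<subseteq> sym n"
    by (rule Sneg_subset_sym)
  show "id \<notin> Sneg n"
    using ncycle_neq_id[OF assms] ncycle_inv_neq_id[OF assms]
    by (auto simp: Sneg_def transpositions_def) (metis transpose_eq_id_iff)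
next
  fix a assume "a \<in> Sneg n"
  then show "inv a \<in> Sneg n"
    by (auto simp: Sneg_def transpositions_def inv_ncycle inv_ncycle_inv)
next
  fix g assume "g \<in> sym n"
  then show "\<exists>ws. set ws \<subseteq> Sneg n \<and> word_prod ws = g"
    using transpositions_generate by (fastforce simp: sym_def Sneg_def)
qed

lemma word_len_Sneg_ncycle:
  assumes "2 \<le> n"
  shows "word_len (Sneg n) (ncycle n) = 1"
proof -
  have gen: "\<exists>ws. set ws \<subseteq> Sneg n \<and> word_prod ws = ncycle n"
    using sym_gen_set_Sneg[OF assms] ncycle_in_sym by (auto simp: sym_gen_set_def)
  have "word_len (Sneg n) (ncycle n) \<noteq> 0"
    using word_len_short(1)[OF gen] ncycle_neq_id[OF assms] by blast
  moreover have "word_len (Sneg n) (ncycle n) \<le> 1"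
    by (rule word_len_generator_le) (simp add: Sneg_def)
  ultimately show ?thesis
    by linarith
qed

lemma card_transpositions_ge: "(n div 2) * (n div 2) \<le> card (transpositions n)"
proof -
  let ?m = "n div 2"
  let ?P = "{1..?m} \<times> {?m + 1..2 * ?m}"
  have "inj_on (\<lambda>(x, y). Transposition.transpose x y) ?P"
  proof (rule inj_onI)
    fix p q assume "p \<in> ?P" "q \<in> ?P"
      and eq: "(\<lambda>(x, y). Transposition.transpose x y) p = (\<lambda>(x, y). Transposition.transpose x y) q"
    then obtain x y x' y' where pq: "p = (x, y)" "q = (x', y')" "x < y" "x < y'" "x' < y"
      by (cases p, cases q) auto
    then have "Transposition.transpose x y = Transposition.transpose x' y'"
      using eq by simp
    then have "Transposition.transpose x' y' x = y"
      by (metis transpose_apply_first)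
    with pq have "x = x' \<and> y = y'"
      by (cases "x = x'") (auto simp: transpose_eq_iff)
    with pq show "p = q"
      by simp
  qed
  moreover have "(\<lambda>(x, y). Transposition.transpose x y) ` ?P \<subseteq> transpositions n"
  proof
    fix t assume "t \<in> (\<lambda>(x, y). Transposition.transpose x y) ` ?P"
    then obtain x y where "t = Transposition.transpose x y" "(x, y) \<in> ?P"
      by auto
    moreover from this(2) have "x \<in> {1..n}" "y \<in> {1..n}" "x \<noteq> y"
      by auto
    ultimately show "t \<in> transpositions n"
      unfolding transpositions_def by blast
  qed
  ultimately have "card ?P \<le> card (transpositions n)"
    using finite_subset[OF transpositions_subset_sym sym_finite]
    by (intro card_inj_on_le) auto
  then show ?thesis
    by (simp add: card_cartesian_product)
qed

lemma transposition_support: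
  assumes "t \<in> transpositions n"
  shows "\<exists>i j. {x. t x \<noteq> x} \<subseteq> {i, j}"
proof -
  from assms obtain i j where "t = Transposition.transpose i j"
    by (auto simp: transpositions_def)
  then have "{x. t x \<noteq> x} \<subseteq> {i, j}"
    by (auto simp: transpose_eq_iff)
  then show ?thesis
    by blast
qed

lemma evenperm_transposition: "t \<in> transpositions n \<Longrightarrow> permutation t \<and> \<not> evenperm t"
  by (auto simp: transpositions_def permutation_swap_id evenperm_swap)

lemma ncycle_conjugate_not_transposition:
  assumes "a \<in> sym n" "3 \<le> n"
  shows "inv a \<circ> ncycle n \<circ> a \<notin> transpositions n"
proof
  assume "inv a \<circ> ncycle n \<circ> a \<in> transpositions n"
  then obtain i j where "{x. (inv a \<circ> ncycle n \<circ> a) x \<noteq> x} \<subseteq> {i, j}"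
    using transposition_support by blast
  then have "n \<le> card {i, j}"
    using assms by (intro ncycle_conjugate_support_card) auto
  then show False
    using assms(2) card_length[of "[i, j]"] by simp
qed

lemma ncycle_conjugate_neq_transposition_product:
  assumes "a \<in> sym n" "5 \<le> n" "s \<in> transpositions n" "t \<in> transpositions n"
  shows "inv a \<circ> ncycle n \<circ> a \<noteq> s \<circ> t"
proof
  assume eq: "inv a \<circ> ncycle n \<circ> a = s \<circ> t"
  obtain i j where "{x. s x \<noteq> x} \<subseteq> {i, j}"
    using transposition_support[OF assms(3)] by blast
  moreover obtain k l where "{x. t x \<noteq> x} \<subseteq> {k, l}"
    using transposition_support[OF assms(4)] by blast
  moreover have "{x. (s \<circ> t) x \<noteq> x} \<subseteq> {x. s x \<noteq> x} \<union> {x. t x \<noteq> x}"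
    by auto
  ultimately have "{x. (inv a \<circ> ncycle n \<circ> a) x \<noteq> x} \<subseteq> {i, j, k, l}"
    unfolding eq by blast
  then have "n \<le> card {i, j, k, l}"
    using assms by (intro ncycle_conjugate_support_card) auto
  then show False
    using assms(2) card_length[of "[i, j, k, l]"] by simp
qed

lemma ncycle_conjugate_neq_power_transposition:
  assumes "a \<in> sym n" "c \<in> {ncycle n, ncycle_inv n}" "t \<in> transpositions n"
  shows "inv a \<circ> ncycle n \<circ> a \<noteq> c \<circ> t" "inv a \<circ> ncycle n \<circ> a \<noteq> t \<circ> c"
proof -
  have perm_ncycle: "permutation (ncycle n)" "permutation (ncycle_inv n)"
    by (auto intro: permutes_imp_permutation ncycle_permutes ncycle_inv_permutes)
  have "permutation a"
    using assms(1) by (auto simp: sym_def intro: permutes_imp_permutation)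
  then have "evenperm (inv a \<circ> ncycle n \<circ> a) = evenperm (ncycle n)"
    using perm_ncycle(1) by (rule evenperm_conjugate)
  moreover have "evenperm (ncycle_inv n) = evenperm (ncycle n)"
    using evenperm_inv[OF perm_ncycle(1)] by (simp add: inv_ncycle)
  ultimately show "inv a \<circ> ncycle n \<circ> a \<noteq> c \<circ> t" "inv a \<circ> ncycle n \<circ> a \<noteq> t \<circ> c"
    using assms(2) perm_ncycle evenperm_transposition[OF assms(3)] by (auto simp: evenperm_comp)
qed

lemma word_len_Sneg_conjugate_ge_3:
  assumes "5 \<le> n" "a \<in> sym n"
    and "inv a \<circ> ncycle n \<circ> a \<notin>
      {ncycle n, ncycle_inv n, ncycle n \<circ> ncycle n, ncycle_inv n \<circ> ncycle_inv n}"
  shows "3 \<le> word_len (Sneg n) (inv a \<circ> ncycle n \<circ> a)"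
proof (rule ccontr)
  let ?g = "inv a \<circ> ncycle n \<circ> a"
  assume "\<not> 3 \<le> word_len (Sneg n) ?g"
  then consider "word_len (Sneg n) ?g = 0" | "word_len (Sneg n) ?g = 1" | "word_len (Sneg n) ?g = 2"
    by linarith
  moreover have gen: "\<exists>ws. set ws \<subseteq> Sneg n \<and> word_prod ws = ?g"
    using sym_gen_set_Sneg[of n] ncycle_conjugate_in_sym[OF assms(2)] assms(1)
    by (auto simp: sym_gen_set_def)
  moreover have not_id: "?g \<noteq> id"
    using assms by (intro ncycle_conjugate_neq_id) auto
  ultimately show False
  proof cases
    case 1
    then show False
      using word_len_short(1)[OF gen] not_id by simp
  next
    case 2
    then show False
      using word_len_short(2)[OF gen] assms ncycle_conjugate_not_transposition[of a n]
      by (auto simp: Sneg_def)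
  next
    case 3
    then obtain s t where st: "s \<in> Sneg n" "t \<in> Sneg n" "?g = s \<circ> t"
      using word_len_short(3)[OF gen] by blast
    then consider
        (powers) "s \<in> {ncycle n, ncycle_inv n}" "t \<in> {ncycle n, ncycle_inv n}"
      | (power_transposition) "s \<in> {ncycle n, ncycle_inv n}" "t \<in> transpositions n"
      | (transposition_power) "s \<in> transpositions n" "t \<in> {ncycle n, ncycle_inv n}"
      | (transpositions) "s \<in> transpositions n" "t \<in> transpositions n"
      by (auto simp: Sneg_def)
    then show False
    proof cases
      case powers
      then show False
        using st(3) assms(3) not_id by (auto simp: ncycle_comp_ncycle_inv ncycle_inv_comp_ncycle)
    next
      case power_transposition
      then show False
        using ncycle_conjugate_neq_power_transposition(1)[OF assms(2)] st(3) by blast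
    next
      case transposition_power
      then show False
        using ncycle_conjugate_neq_power_transposition(2)[OF assms(2)] st(3) by blast
    next
      case transpositions
      then show False
        using ncycle_conjugate_neq_transposition_product[OF assms(2,1)] st(3) by blast
    qed
  qed
qed

lemma card_Sneg:
  assumes "2 \<le> n"
  shows "n * n \<le> 16 * card (Sneg n)"
proof -
  have "n \<le> 4 * (n div 2)"
    using assms by linarith
  then have "n * n \<le> 16 * ((n div 2) * (n div 2))"
    using mult_le_mono[of n "4 * (n div 2)" n "4 * (n div 2)"] by simp
  also have "(n div 2) * (n div 2) \<le> card (transpositions n)"
    by (rule card_transpositions_ge)
  also have "\<dots> \<le> card (Sneg n)"
    using Sneg_subset_sym sym_finite by (intro card_mono) (auto simp: Sneg_def intro: finite_subset)
  finally show ?thesis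
    by simp
qed

lemma Av_Sneg_ge:
  assumes "5 \<le> n"
  shows "3 - 192 / n \<le> Av (Sneg n) (ncycle n)"
proof -
  let ?S = "Sneg n"
  let ?H = "{ncycle n, ncycle_inv n, ncycle n \<circ> ncycle n, ncycle_inv n \<circ> ncycle_inv n}"
  let ?B = "{a \<in> sym n. inv a \<circ> ncycle n \<circ> a \<in> ?H}"
  have fin: "finite ?S"
    using Sneg_subset_sym sym_finite by (rule finite_subset)
  have "card (?S \<inter> ?B) \<le> card ?B"
    using sym_finite by (intro card_mono) auto
  also have "\<dots> \<le> card ?H * n"
    using assms by (intro card_ncycle_conjugators_in) auto
  also have "\<dots> \<le> 4 * n"
    using card_length[of "[ncycle n, ncycle_inv n, ncycle n \<circ> ncycle n, ncycle_inv n \<circ> ncycle_inv n]"]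
    by simp
  finally have bad: "3 * real (card (?S \<inter> ?B)) \<le> 192 * n / 16"
    by simp
  have "real (n * n) \<le> real (16 * card ?S)"
    using card_Sneg assms by (intro of_nat_mono) auto
  then have big: "real n * n / 16 \<le> card ?S"
    by simp
  have "3 - 192 / n = 3 - (192 * n / 16) / (n * n / 16)"
    by simp
  also have "\<dots> \<le> 3 - 3 * real (card (?S \<inter> ?B)) / card ?S"
    using bad big assms by (intro diff_left_mono frac_le) auto
  also have "\<dots> = 3 * (card ?S - real (card (?S \<inter> ?B))) / card ?S"
    using fin by (simp add: diff_divide_distrib Sneg_def)
  also have "\<dots> \<le> Av ?S (ncycle n)"
  proof -
    have "3 \<le> word_len ?S (inv a \<circ> ncycle n \<circ> a)" if "a \<in> ?S - ?B" for a
      using that assms Sneg_subset_sym by (intro word_len_Sneg_conjugate_ge_3) auto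
    then show ?thesis
      using Av_ge_of_conjugate_bound[OF fin, of ?B 3] by simp
  qed
  finally show ?thesis .
qed

theorem mainTheorem15:
  fixes \<epsilon> :: real
  assumes "\<epsilon> > 0"
  shows "\<exists>N. \<forall>n\<ge>N. \<exists>Spos Sneg.
     sym_gen_set n Spos \<and> sym_gen_set n Sneg \<and>
     word_len Spos (ncycle n) = 2 \<and> Av Spos (ncycle n) < 1 + \<epsilon> \<and>
       curv Spos (ncycle n) > (1 - \<epsilon>) / 2 \<and>
     word_len Sneg (ncycle n) = 1 \<and> Av Sneg (ncycle n) > 3 - \<epsilon> \<and>
       curv Sneg (ncycle n) < -2 + \<epsilon>"
proof (intro exI[of _ "max 5 (nat \<lceil>193 / \<epsilon>\<rceil>)"] allI impI)
  fix n :: nat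
  assume "max 5 (nat \<lceil>193 / \<epsilon>\<rceil>) \<le> n"
  then have n: "5 \<le> n" and "193 / \<epsilon> \<le> n"
    by linarith+
  then have small: "192 / n < \<epsilon>"
    using assms by (simp add: divide_less_eq divide_le_eq mult.commute)
  moreover have "2 / real n \<le> 192 / n"
    by (rule divide_right_mono) auto
  ultimately have pos: "word_len (Spos n) (ncycle n) = 2" "Av (Spos n) (ncycle n) < 1 + \<epsilon>"
    using n word_len_Spos_ncycle Av_Spos_le[of n] by auto
  have neg: "word_len (Sneg n) (ncycle n) = 1" "Av (Sneg n) (ncycle n) > 3 - \<epsilon>"
    using n word_len_Sneg_ncycle Av_Sneg_ge[of n] small by auto
  show "\<exists>Spos Sneg.
     sym_gen_set n Spos \<and> sym_gen_set n Sneg \<and>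
     word_len Spos (ncycle n) = 2 \<and> Av Spos (ncycle n) < 1 + \<epsilon> \<and>
       curv Spos (ncycle n) > (1 - \<epsilon>) / 2 \<and>
     word_len Sneg (ncycle n) = 1 \<and> Av Sneg (ncycle n) > 3 - \<epsilon> \<and>
       curv Sneg (ncycle n) < -2 + \<epsilon>"
    using n pos neg sym_gen_set_Spos sym_gen_set_Sneg
    by (intro exI[of _ "Spos n"] exI[of _ "Sneg n"]) (auto simp: curv_def)
qed

end
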